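(* Let $G$ be a graph of order $n$ with vertex degrees $d_1\ge d_2\ge\cdots\ge d_n$. Then $$\mathcal E(G)\le 2\sum_{i=1}^h d_i,$$ where $h=\min\{\nu^+(G),\nu^-(G)\}$.
   Context: All graphs are finite and simple. $\mathcal E(G)$ is the sum of absolute values of the adjacency eigenvalues of $G$; $\nu^+(G)$ and $\nu^-(G)$ are the numbers of positive and negative adjacency eigenvalues. *)

theory Defs
  imports "Jordan_Normal_Form.Char_Poly" "HOL-Computational_Algebra.Polynomial"
begin

(* A finite simple graph of order n: vertex set {0..<n}, symmetric irreflexive
   adjacency relation E (only its restriction to {0..<n} matters). *)
definition simple_graph :: "nat \<Rightarrow> (nat \<Rightarrow> nat \<Rightarrow> bool) \<Rightarrow> bool" where
  "simple_graph n E \<longleftrightarrow> (\<forall>i<n. \<forall>j<n. E i j \<longleftrightarrow> E j i) \<and> (\<forall>i<n. \<not> E i i)"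

definition adj_matrix :: "nat \<Rightarrow> (nat \<Rightarrow> nat \<Rightarrow> bool) \<Rightarrow> real mat" where
  "adj_matrix n E = mat n n (\<lambda>(i,j). if E i j then 1 else 0)"

definition degree_v :: "nat \<Rightarrow> (nat \<Rightarrow> nat \<Rightarrow> bool) \<Rightarrow> nat \<Rightarrow> nat" where
  "degree_v n E i = card {j. j < n \<and> E i j}"

definition sorted_degrees :: "nat \<Rightarrow> (nat \<Rightarrow> nat \<Rightarrow> bool) \<Rightarrow> nat list" where
  "sorted_degrees n E = rev (sort (map (degree_v n E) [0..<n]))"

definition adj_eigenvalues :: "nat \<Rightarrow> (nat \<Rightarrow> nat \<Rightarrow> bool) \<Rightarrow> complex multiset" where
  "adj_eigenvalues n E = proots (char_poly (map_mat complex_of_real (adj_matrix n E)))"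

definition energy :: "nat \<Rightarrow> (nat \<Rightarrow> nat \<Rightarrow> bool) \<Rightarrow> real" where
  "energy n E = (\<Sum>x\<in>#adj_eigenvalues n E. cmod x)"

definition nu_plus :: "nat \<Rightarrow> (nat \<Rightarrow> nat \<Rightarrow> bool) \<Rightarrow> nat" where
  "nu_plus n E = size (filter_mset (\<lambda>x. x \<in> \<real> \<and> Re x > 0) (adj_eigenvalues n E))"

definition nu_minus :: "nat \<Rightarrow> (nat \<Rightarrow> nat \<Rightarrow> bool) \<Rightarrow> nat" where
  "nu_minus n E = size (filter_mset (\<lambda>x. x \<in> \<real> \<and> Re x < 0) (adj_eigenvalues n E))"

end

theory Submission
  imports Defs "Jordan_Normal_Form.Schur_Decomposition"
begin

text \<open>Let \<open>u\<^sub>1, \<dots>, u\<^sub>n\<close> be an orthonormal eigenbasis of the adjacency matrix \<open>A\<close> with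
  eigenvalues \<open>l\<^sub>1, \<dots>, l\<^sub>n\<close> (the spectral theorem, obtained by repeated deflation).
  Since \<open>A\<close> has trace \<open>0\<close>, the energy is twice the sum of the positive eigenvalues and also twice
  the negated sum of the negative ones. For a set \<open>S\<close> of indices and \<open>\<sigma> = \<plusminus>1\<close>,
  \<open>\<sigma> \<Sum>\<^bsub>i\<in>S\<^esub> l\<^sub>i = \<Sum>\<^bsub>i\<in>S\<^esub> \<sigma> u\<^sub>i\<^sup>T A u\<^sub>i \<le> \<Sum>\<^sub>x d\<^sub>x w\<^sub>x\<close>, where \<open>w\<^sub>x = \<Sum>\<^bsub>i\<in>S\<^esub> u\<^sub>i(x)\<^sup>2\<close>
  lies in \<open>[0, 1]\<close> and \<open>\<Sum>\<^sub>x w\<^sub>x = |S|\<close>, and such a weighted degree sum is at most the sum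
  of the \<open>|S|\<close> largest degrees. Taking for \<open>S\<close> the smaller of the sets of positive and of
  negative eigenvalues gives the bound.\<close>

section \<open>Trace and eigenvalues\<close>

definition mat_trace :: "'a::comm_ring_1 mat \<Rightarrow> 'a" where
  "mat_trace M = (\<Sum>i<dim_row M. M $$ (i,i))"

lemma mat_trace_mult_comm:
  assumes X: "X \<in> carrier_mat n m" and Y: "Y \<in> carrier_mat m n"
  shows "mat_trace (X * Y) = mat_trace (Y * X)"
proof -
  have "mat_trace (X * Y) = (\<Sum>i<n. \<Sum>j<m. X $$ (i,j) * Y $$ (j,i))"
    using X Y by (simp add: mat_trace_def scalar_prod_def atLeast0LessThan)
  also have "\<dots> = (\<Sum>j<m. \<Sum>i<n. Y $$ (j,i) * X $$ (i,j))"
    by (subst sum.swap) (simp add: mult.commute)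
  also have "\<dots> = mat_trace (Y * X)"
    using X Y by (simp add: mat_trace_def scalar_prod_def atLeast0LessThan)
  finally show ?thesis .
qed

lemma mat_trace_similar:
  assumes sim: "similar_mat_wit A B P Q" and A: "A \<in> carrier_mat n n"
  shows "mat_trace A = mat_trace B"
proof -
  from similar_mat_witD2[OF A sim]
  have B: "B \<in> carrier_mat n n" and P: "P \<in> carrier_mat n n" and Q: "Q \<in> carrier_mat n n"
    and QP: "Q * P = 1\<^sub>m n" and A_eq: "A = P * B * Q" by auto
  have "mat_trace A = mat_trace (P * (B * Q))" using A_eq P B Q by simp
  also have "\<dots> = mat_trace ((B * Q) * P)" using P B Q by (intro mat_trace_mult_comm) auto
  also have "\<dots> = mat_trace (B * (Q * P))" using P B Q by simp
  also have "\<dots> = mat_trace B" using QP B by simp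
  finally show ?thesis .
qed

lemma mat_trace_eq_sum_roots:
  fixes M :: "'a::conjugatable_ordered_field mat"
  assumes M: "M \<in> carrier_mat n n" and cp: "char_poly M = (\<Prod>a\<leftarrow>es. [:- a, 1:])"
  shows "mat_trace M = sum_list es"
proof -
  obtain B P Q where "schur_decomposition M es = (B,P,Q)"
    by (cases "schur_decomposition M es") auto
  from schur_decomposition[OF M cp this]
  have sim: "similar_mat_wit M B P Q" and diag: "diag_mat B = es" by auto
  from similar_mat_witD2[OF M sim] have B: "B \<in> carrier_mat n n" by auto
  have "mat_trace M = mat_trace B" by (rule mat_trace_similar[OF sim M])
  also have "\<dots> = sum_list (diag_mat B)"
    using B by (simp add: mat_trace_def diag_mat_def sum_list_sum_nth atLeast0LessThan)
  finally show ?thesis by (simp add: diag)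
qed

lemma char_poly_root_ne_if_mat_trace_ne:
  fixes M :: "complex mat"
  assumes M: "M \<in> carrier_mat n n" and tr: "mat_trace M \<noteq> of_nat n * c"
  shows "\<exists>\<mu>. poly (char_poly M) \<mu> = 0 \<and> \<mu> \<noteq> c"
proof (rule ccontr)
  assume no_other_root: "\<nexists>\<mu>. poly (char_poly M) \<mu> = 0 \<and> \<mu> \<noteq> c"
  obtain es where cp: "char_poly M = (\<Prod>a\<leftarrow>es. [:- a, 1:])" and len: "length es = n"
    using char_poly_factorized[OF M] by blast
  have "\<forall>a\<in>set es. a = c"
    using no_other_root unfolding cp by (auto simp: poly_prod_list)
  then have "es = replicate n c"
    using len replicate_length_same[of es c] by simp
  then have "mat_trace M = of_nat n * c"
    by (simp add: mat_trace_eq_sum_roots[OF M cp] sum_list_replicate)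
  with tr show False ..
qed

lemma symmetric_char_poly_root_real:
  fixes C :: "real mat"
  assumes C: "C \<in> carrier_mat n n"
    and sym: "\<And>i j. i < n \<Longrightarrow> j < n \<Longrightarrow> C $$ (i,j) = C $$ (j,i)"
    and root: "poly (char_poly (map_mat complex_of_real C)) \<mu> = 0"
  shows "Im \<mu> = 0"
proof -
  let ?M = "map_mat complex_of_real C"
  have M: "?M \<in> carrier_mat n n" using C by simp
  have "eigenvalue ?M \<mu>" using root eigenvalue_root_char_poly[OF M] by simp
  then obtain v where "eigenvector ?M v \<mu>" unfolding eigenvalue_def by blast
  then have v: "v \<in> carrier_vec n" and v0: "v \<noteq> 0\<^sub>v n" and Mv: "?M *\<^sub>v v = \<mu> \<cdot>\<^sub>v v"
    using M unfolding eigenvector_def by auto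
  have row: "(\<Sum>j<n. of_real (C $$ (i,j)) * v $ j) = \<mu> * v $ i" if "i < n" for i
  proof -
    have "(?M *\<^sub>v v) $ i = (\<Sum>j<n. of_real (C $$ (i,j)) * v $ j)"
      using that C v by (simp add: scalar_prod_def atLeast0LessThan)
    with Mv that v show ?thesis by simp
  qed
  \<comment> \<open>The Hermitian form \<open>v\<^sup>* C v\<close> equals \<open>\<mu> |v|\<^sup>2\<close> and is real since \<open>C\<close> is real symmetric.\<close>
  define s where "s = (\<Sum>i<n. \<Sum>j<n. cnj (v $ i) * of_real (C $$ (i,j)) * v $ j)"
  define N where "N = (\<Sum>i<n. (cmod (v $ i))\<^sup>2)"
  have s_eq: "s = \<mu> * of_real N"
  proof -
    have "s = (\<Sum>i<n. cnj (v $ i) * (\<Sum>j<n. of_real (C $$ (i,j)) * v $ j))"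
      unfolding s_def by (simp add: sum_distrib_left mult.assoc)
    also have "\<dots> = (\<Sum>i<n. \<mu> * (cnj (v $ i) * v $ i))"
      using row by (simp add: mult.left_commute)
    also have "\<dots> = \<mu> * of_real N"
      unfolding N_def of_real_sum complex_norm_square by (simp add: sum_distrib_left mult.commute)
    finally show ?thesis .
  qed
  have s_real: "cnj s = s"
  proof -
    have "cnj s = (\<Sum>i<n. \<Sum>j<n. v $ i * of_real (C $$ (i,j)) * cnj (v $ j))"
      unfolding s_def by simp
    also have "\<dots> = (\<Sum>j<n. \<Sum>i<n. v $ i * of_real (C $$ (i,j)) * cnj (v $ j))"
      by (rule sum.swap)
    also have "\<dots> = s" unfolding s_def
      by (intro sum.cong refl) (simp add: sym mult.commute mult.left_commute)
    finally show ?thesis .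
  qed
  have "N > 0"
  proof -
    from v v0 obtain i where "i < n" and "v $ i \<noteq> 0"
      by (metis eq_vecI carrier_vecD index_zero_vec)
    then show ?thesis unfolding N_def
      by (intro sum_pos2[of _ i]) auto
  qed
  moreover have "Im s = 0" using s_real by (metis cnj.simps(2) neg_equal_zero)
  ultimately show ?thesis using s_eq by simp
qed

lemma symmetric_eigenvalue_ne_if_mat_trace_ne:
  fixes C :: "real mat"
  assumes C: "C \<in> carrier_mat n n"
    and sym: "\<And>i j. i < n \<Longrightarrow> j < n \<Longrightarrow> C $$ (i,j) = C $$ (j,i)"
    and tr: "mat_trace C \<noteq> real n * c"
  shows "\<exists>r x. r \<noteq> c \<and> (\<exists>b<n. x b \<noteq> 0) \<and> (\<forall>y<n. (\<Sum>b<n. C $$ (y,b) * x b) = r * x y)"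
proof -
  let ?M = "map_mat complex_of_real C"
  have M: "?M \<in> carrier_mat n n" using C by simp
  have "mat_trace ?M = of_real (mat_trace C)"
    using C by (simp add: mat_trace_def)
  with tr have "mat_trace ?M \<noteq> of_nat n * of_real c"
    by (metis of_real_eq_iff of_real_mult of_real_of_nat_eq)
  then obtain \<mu> where root: "poly (char_poly ?M) \<mu> = 0" and "\<mu> \<noteq> of_real c"
    using char_poly_root_ne_if_mat_trace_ne[OF M] by blast
  moreover have "Im \<mu> = 0" by (rule symmetric_char_poly_root_real[OF C sym root])
  ultimately have \<mu>: "\<mu> = of_real (Re \<mu>)" and "Re \<mu> \<noteq> c"
    by (auto simp: complex_eq_iff)
  have "poly (char_poly C) (Re \<mu>) = 0"
    using root unfolding of_real_hom.char_poly_hom[OF C]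
    by (subst (asm) \<mu>) simp
  then have "eigenvalue C (Re \<mu>)" using eigenvalue_root_char_poly[OF C] by simp
  then obtain x where "eigenvector C x (Re \<mu>)" unfolding eigenvalue_def by blast
  then have x: "x \<in> carrier_vec n" and "x \<noteq> 0\<^sub>v n" and Cx: "C *\<^sub>v x = Re \<mu> \<cdot>\<^sub>v x"
    using C unfolding eigenvector_def by auto
  then have "\<exists>b<n. x $ b \<noteq> 0"
    by (metis eq_vecI carrier_vecD index_zero_vec)
  moreover have "(\<Sum>b<n. C $$ (y,b) * x $ b) = Re \<mu> * x $ y" if "y < n" for y
  proof -
    have "(C *\<^sub>v x) $ y = (\<Sum>b<n. C $$ (y,b) * x $ b)"
      using that C x by (simp add: scalar_prod_def atLeast0LessThan)
    with Cx that x show ?thesis by simp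
  qed
  ultimately show ?thesis using \<open>Re \<mu> \<noteq> c\<close> by blast
qed

section \<open>Orthonormal eigenvectors of real symmetric matrices\<close>

definition orthonormal_eigvecs ::
    "nat \<Rightarrow> real mat \<Rightarrow> nat \<Rightarrow> (nat \<Rightarrow> nat \<Rightarrow> real) \<Rightarrow> (nat \<Rightarrow> real) \<Rightarrow> bool" where
  "orthonormal_eigvecs n A k u l \<longleftrightarrow>
     (\<forall>i<k. \<forall>j<k. (\<Sum>b<n. u i b * u j b) = (if i = j then 1 else 0)) \<and>
     (\<forall>i<k. \<forall>x<n. (\<Sum>b<n. A $$ (x,b) * u i b) = l i * u i x)"

lemma
  assumes "orthonormal_eigvecs n A k u l"
  shows orthonormal_eigvecs_orth:
      "i < k \<Longrightarrow> j < k \<Longrightarrow> (\<Sum>b<n. u i b * u j b) = (if i = j then 1 else 0)"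
    and orthonormal_eigvecs_eig:
      "i < k \<Longrightarrow> x < n \<Longrightarrow> (\<Sum>b<n. A $$ (x,b) * u i b) = l i * u i x"
  using assms unfolding orthonormal_eigvecs_def by blast+

lemma symmetric_eigvecs_orthogonal:
  fixes C :: "real mat"
  assumes sym: "\<And>i j. i < n \<Longrightarrow> j < n \<Longrightarrow> C $$ (i,j) = C $$ (j,i)"
    and x: "\<forall>y<n. (\<Sum>b<n. C $$ (y,b) * x b) = r * x y"
    and v: "\<forall>y<n. (\<Sum>b<n. C $$ (y,b) * v b) = s * v y"
    and "r \<noteq> s"
  shows "(\<Sum>b<n. v b * x b) = 0"
proof -
  have "r * (\<Sum>b<n. v b * x b) = (\<Sum>y<n. v y * (\<Sum>b<n. C $$ (y,b) * x b))"
    using x by (simp add: sum_distrib_left mult_ac)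
  also have "\<dots> = (\<Sum>y<n. \<Sum>b<n. x b * (C $$ (b,y) * v y))"
    by (auto simp: sum_distrib_left sym mult_ac intro!: sum.cong)
  also have "\<dots> = (\<Sum>b<n. x b * (\<Sum>y<n. C $$ (b,y) * v y))"
    by (subst sum.swap) (simp add: sum_distrib_left)
  also have "\<dots> = s * (\<Sum>b<n. v b * x b)"
    using v by (simp add: sum_distrib_left mult_ac)
  finally have "r * (\<Sum>b<n. v b * x b) = s * (\<Sum>b<n. v b * x b)" .
  with \<open>r \<noteq> s\<close> show ?thesis by simp
qed

text \<open>The deflation replaces the eigenvalue of each known eigenvector \<open>u i\<close> by \<open>c\<close>.\<close>

definition deflation ::
    "nat \<Rightarrow> real mat \<Rightarrow> nat \<Rightarrow> (nat \<Rightarrow> nat \<Rightarrow> real) \<Rightarrow> (nat \<Rightarrow> real) \<Rightarrow> real \<Rightarrow> real mat" where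
  "deflation n A k u l c = mat n n (\<lambda>(x,y). A $$ (x,y) - (\<Sum>i<k. (l i - c) * u i x * u i y))"

lemma deflation_carrier: "deflation n A k u l c \<in> carrier_mat n n"
  by (simp add: deflation_def)

lemma deflation_symmetric:
  assumes "\<And>i j. i < n \<Longrightarrow> j < n \<Longrightarrow> A $$ (i,j) = A $$ (j,i)" "x < n" "y < n"
  shows "deflation n A k u l c $$ (x,y) = deflation n A k u l c $$ (y,x)"
  using assms by (simp add: deflation_def mult.commute mult.left_commute)

lemma deflation_mult:
  assumes "y < n"
  shows "(\<Sum>b<n. deflation n A k u l c $$ (y,b) * z b) =
    (\<Sum>b<n. A $$ (y,b) * z b) - (\<Sum>i<k. (l i - c) * u i y * (\<Sum>b<n. u i b * z b))"
proof -
  have "(\<Sum>b<n. deflation n A k u l c $$ (y,b) * z b) =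
      (\<Sum>b<n. A $$ (y,b) * z b) - (\<Sum>b<n. \<Sum>i<k. (l i - c) * u i y * u i b * z b)"
    using assms by (simp add: deflation_def left_diff_distrib sum_subtractf sum_distrib_right)
  also have "(\<Sum>b<n. \<Sum>i<k. (l i - c) * u i y * u i b * z b) =
      (\<Sum>i<k. (l i - c) * u i y * (\<Sum>b<n. u i b * z b))"
    by (subst sum.swap) (simp add: sum_distrib_left mult.assoc)
  finally show ?thesis .
qed

lemma deflation_eigvec:
  assumes es: "orthonormal_eigvecs n A k u l" and "j < k" "y < n"
  shows "(\<Sum>b<n. deflation n A k u l c $$ (y,b) * u j b) = c * u j y"
proof -
  have "(\<Sum>i<k. (l i - c) * u i y * (\<Sum>b<n. u i b * u j b)) =
      (\<Sum>i<k. if i = j then (l i - c) * u i y else 0)"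
    using orthonormal_eigvecs_orth[OF es _ \<open>j < k\<close>] by (intro sum.cong) auto
  also have "\<dots> = (l j - c) * u j y"
    using \<open>j < k\<close> by simp
  finally have deflated: "(\<Sum>i<k. (l i - c) * u i y * (\<Sum>b<n. u i b * u j b)) = (l j - c) * u j y" .
  show ?thesis
    unfolding deflation_mult[OF \<open>y < n\<close>] deflated orthonormal_eigvecs_eig[OF es assms(2,3)]
    by (simp add: algebra_simps)
qed

lemma mat_trace_deflation:
  assumes es: "orthonormal_eigvecs n A k u l" and A: "A \<in> carrier_mat n n"
  shows "mat_trace (deflation n A k u l c) = mat_trace A - (\<Sum>i<k. l i) + real k * c"
proof -
  have "(\<Sum>x<n. \<Sum>i<k. (l i - c) * u i x * u i x) = (\<Sum>i<k. (l i - c) * (\<Sum>x<n. u i x * u i x))"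
    by (subst sum.swap) (simp add: sum_distrib_left mult.assoc)
  also have "\<dots> = (\<Sum>i<k. l i - c)"
    using orthonormal_eigvecs_orth[OF es] by simp
  finally show ?thesis
    using A by (simp add: mat_trace_def deflation_def sum_subtractf)
qed

lemma exists_unit_rescaling:
  fixes x :: "nat \<Rightarrow> real"
  assumes "\<exists>b<n. x b \<noteq> 0"
  shows "\<exists>t. (\<Sum>b<n. (t * x b) * (t * x b)) = 1"
proof -
  define N where "N = (\<Sum>b<n. x b * x b)"
  obtain b where "b < n" "x b \<noteq> 0" using assms by blast
  then have "0 < x b * x b" by (metis not_real_square_gt_zero)
  with \<open>b < n\<close> have "N > 0"
    unfolding N_def by (intro sum_pos2[of "{..<n}" b]) auto
  have "(\<Sum>b<n. (x b / sqrt N) * (x b / sqrt N)) = N / (sqrt N * sqrt N)"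
    by (simp add: N_def sum_divide_distrib)
  also have "\<dots> = 1"
    using \<open>N > 0\<close> by simp
  finally show ?thesis
    by (intro exI[of _ "1 / sqrt N"]) simp
qed

lemma orthonormal_eigvecs_Suc:
  assumes es: "orthonormal_eigvecs n A k u l"
    and w_unit: "(\<Sum>b<n. w b * w b) = 1"
    and w_orth: "\<And>j. j < k \<Longrightarrow> (\<Sum>b<n. u j b * w b) = 0"
    and Aw: "\<And>y. y < n \<Longrightarrow> (\<Sum>b<n. A $$ (y,b) * w b) = m * w y"
  shows "orthonormal_eigvecs n A (Suc k) (u(k := w)) (l(k := m))"
  unfolding orthonormal_eigvecs_def
proof (intro conjI allI impI)
  fix i j assume "i < Suc k" "j < Suc k"
  then consider "i < k" "j < k" | "i = k" "j < k" | "i < k" "j = k" | "i = k" "j = k"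
    by (auto simp: less_Suc_eq)
  then show "(\<Sum>b<n. (u(k := w)) i b * (u(k := w)) j b) = (if i = j then 1 else 0)"
  proof cases
    case 1 then show ?thesis by (simp add: orthonormal_eigvecs_orth[OF es])
  next
    case 2 then show ?thesis using w_orth by (simp add: mult.commute)
  next
    case 3 then show ?thesis by (simp add: w_orth)
  next
    case 4 then show ?thesis by (simp add: w_unit)
  qed
next
  fix i y assume "i < Suc k" "y < n"
  then consider "i < k" | "i = k"
    by (auto simp: less_Suc_eq)
  then show "(\<Sum>b<n. A $$ (y,b) * (u(k := w)) i b) = (l(k := m)) i * (u(k := w)) i y"
  proof cases
    case 1 then show ?thesis by (simp add: orthonormal_eigvecs_eig[OF es] \<open>y < n\<close>)
  next
    case 2 then show ?thesis by (simp add: Aw \<open>y < n\<close>)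
  qed
qed

text \<open>A symmetric matrix with fewer than \<open>n\<close> orthonormal eigenvectors has one more
  orthogonal to them: the trace forces the deflation at a suitable \<open>c\<close> to have an eigenvalue
  other than \<open>c\<close>, and the corresponding eigenvector is orthogonal to all \<open>u i\<close>, so the
  deflation acts on it as \<open>A\<close> does.\<close>

lemma orthonormal_eigvecs_extend:
  fixes A :: "real mat"
  assumes A: "A \<in> carrier_mat n n"
    and sym: "\<And>i j. i < n \<Longrightarrow> j < n \<Longrightarrow> A $$ (i,j) = A $$ (j,i)"
    and es: "orthonormal_eigvecs n A k u l" and "k < n"
  shows "\<exists>w m. orthonormal_eigvecs n A (Suc k) (u(k := w)) (l(k := m))"
proof -
  \<comment> \<open>chosen so that the deflation has trace \<open>n c - 1\<close>\<close>
  define c where "c = (mat_trace A - (\<Sum>i<k. l i) + 1) / real (n - k)"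
  let ?D = "deflation n A k u l c"
  have "real (n - k) * c = mat_trace A - (\<Sum>i<k. l i) + 1"
    using \<open>k < n\<close> by (simp add: c_def)
  then have "mat_trace ?D \<noteq> real n * c"
    using \<open>k < n\<close> by (simp add: mat_trace_deflation[OF es A] algebra_simps)
  then obtain r x where "r \<noteq> c" and x_nz: "\<exists>b<n. x b \<noteq> 0"
    and Dx: "\<forall>y<n. (\<Sum>b<n. ?D $$ (y,b) * x b) = r * x y"
    using symmetric_eigenvalue_ne_if_mat_trace_ne[OF deflation_carrier deflation_symmetric[OF sym]]
    by blast
  have orth: "(\<Sum>b<n. u j b * x b) = 0" if "j < k" for j
    using deflation_symmetric[OF sym] Dx deflation_eigvec[OF es that] \<open>r \<noteq> c\<close>
    by (intro symmetric_eigvecs_orthogonal) auto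
  have Ax: "(\<Sum>b<n. A $$ (y,b) * x b) = r * x y" if "y < n" for y
    using Dx that by (simp add: deflation_mult orth)
  obtain t where unit: "(\<Sum>b<n. (t * x b) * (t * x b)) = 1"
    using exists_unit_rescaling[OF x_nz] by blast
  define w where "w = (\<lambda>b. t * x b)"
  have w_unit: "(\<Sum>b<n. w b * w b) = 1"
    using unit by (simp add: w_def)
  have w_orth: "(\<Sum>b<n. u j b * w b) = 0" if "j < k" for j
    using orth[OF that] by (simp add: w_def sum_distrib_left[symmetric] mult_ac)
  have Aw: "(\<Sum>b<n. A $$ (y,b) * w b) = r * w y" if "y < n" for y
    using Ax[OF that] by (simp add: w_def sum_distrib_left[symmetric] mult_ac)
  from orthonormal_eigvecs_Suc[OF es w_unit w_orth Aw] show ?thesis by blast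
qed

lemma orthonormal_eigvecs_exists:
  fixes A :: "real mat"
  assumes A: "A \<in> carrier_mat n n"
    and sym: "\<And>i j. i < n \<Longrightarrow> j < n \<Longrightarrow> A $$ (i,j) = A $$ (j,i)"
  shows "\<exists>u l. orthonormal_eigvecs n A n u l"
proof -
  have "k \<le> n \<Longrightarrow> \<exists>u l. orthonormal_eigvecs n A k u l" for k
  proof (induction k)
    case 0
    show ?case by (simp add: orthonormal_eigvecs_def)
  next
    case (Suc k)
    then obtain u l where "orthonormal_eigvecs n A k u l" by auto
    from orthonormal_eigvecs_extend[OF A sym this] Suc.prems
    obtain w m where "orthonormal_eigvecs n A (Suc k) (u(k := w)) (l(k := m))" by auto
    then show ?case by blast
  qed
  then show ?thesis by blast
qed

lemma orthonormal_rows_imp_orthonormal_cols: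
  fixes u :: "nat \<Rightarrow> nat \<Rightarrow> 'a::field"
  assumes orth: "\<And>i j. i < n \<Longrightarrow> j < n \<Longrightarrow> (\<Sum>b<n. u i b * u j b) = (if i = j then 1 else 0)"
    and "x < n" "y < n"
  shows "(\<Sum>i<n. u i x * u i y) = (if x = y then 1 else 0)"
proof -
  define U where "U = mat n n (\<lambda>(x,i). u i x)"
  have U: "U \<in> carrier_mat n n" "transpose_mat U \<in> carrier_mat n n"
    unfolding U_def by auto
  have "transpose_mat U * U = 1\<^sub>m n"
    by (rule eq_matI) (auto simp: U_def scalar_prod_def atLeast0LessThan orth)
  then have "U * transpose_mat U = 1\<^sub>m n"
    by (rule mat_mult_left_right_inverse[OF U(2) U(1)])
  then have "(U * transpose_mat U) $$ (x,y) = (if x = y then 1 else 0)"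
    using assms(2,3) by simp
  then show ?thesis
    using assms(2,3) by (simp add: U_def scalar_prod_def atLeast0LessThan)
qed

lemma char_poly_orthonormal_eigvecs:
  fixes A :: "real mat"
  assumes A: "A \<in> carrier_mat n n" and es: "orthonormal_eigvecs n A n u l"
  shows "char_poly A = (\<Prod>a\<leftarrow>map l [0..<n]. [:- a, 1:])"
proof -
  define U where "U = mat n n (\<lambda>(x,i). u i x)"
  define D where "D = mat n n (\<lambda>(i,j). if i = j then l i else 0)"
  have U: "U \<in> carrier_mat n n" "transpose_mat U \<in> carrier_mat n n" and D: "D \<in> carrier_mat n n"
    unfolding U_def D_def by auto
  have UtU: "transpose_mat U * U = 1\<^sub>m n"
    by (rule eq_matI) (auto simp: U_def scalar_prod_def atLeast0LessThan orthonormal_eigvecs_orth[OF es])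
  have UUt: "U * transpose_mat U = 1\<^sub>m n"
    by (rule mat_mult_left_right_inverse[OF U(2) U(1) UtU])
  have A_expand: "A $$ (x,y) = (\<Sum>i<n. l i * u i x * u i y)" if "x < n" "y < n" for x y
  proof -
    have "(\<Sum>i<n. l i * u i x * u i y) = (\<Sum>i<n. (\<Sum>b<n. A $$ (x,b) * u i b) * u i y)"
      using orthonormal_eigvecs_eig[OF es _ \<open>x < n\<close>] by simp
    also have "\<dots> = (\<Sum>b<n. A $$ (x,b) * (\<Sum>i<n. u i b * u i y))"
      by (simp add: sum_distrib_left sum_distrib_right mult.assoc) (rule sum.swap)
    also have "\<dots> = (\<Sum>b<n. A $$ (x,b) * (if b = y then 1 else 0))"
      using orthonormal_rows_imp_orthonormal_cols[OF orthonormal_eigvecs_orth[OF es] _ \<open>y < n\<close>]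
      by simp
    also have "\<dots> = A $$ (x,y)"
      using \<open>y < n\<close> by (simp add: if_distrib cong: if_cong)
    finally show ?thesis by simp
  qed
  have "A = U * D * transpose_mat U"
  proof (rule eq_matI)
    fix x y assume "x < dim_row (U * D * transpose_mat U)" "y < dim_col (U * D * transpose_mat U)"
    then have "x < n" "y < n" using U D by auto
    have UD: "(U * D) $$ (x,i) = u i x * l i" if "i < n" for i
    proof -
      have "(U * D) $$ (x,i) = (\<Sum>j<n. u j x * (if j = i then l j else 0))"
        using \<open>x < n\<close> that by (simp add: U_def D_def scalar_prod_def atLeast0LessThan)
      also have "\<dots> = u i x * l i"
        using that by (simp add: if_distrib cong: if_cong)
      finally show ?thesis .
    qed
    have "(U * D * transpose_mat U) $$ (x,y) = (\<Sum>i<n. (U * D) $$ (x,i) * u i y)"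
      using \<open>x < n\<close> \<open>y < n\<close> U D by (simp add: U_def scalar_prod_def atLeast0LessThan)
    also have "\<dots> = (\<Sum>i<n. l i * u i x * u i y)"
      using UD by (simp add: mult.commute mult.left_commute)
    finally show "A $$ (x,y) = (U * D * transpose_mat U) $$ (x,y)"
      using A_expand \<open>x < n\<close> \<open>y < n\<close> by simp
  qed (use A U D in auto)
  then have "similar_mat_wit A D U (transpose_mat U)"
    unfolding similar_mat_wit_def Let_def using A U D UtU UUt by auto
  then have "char_poly A = char_poly D"
    by (intro char_poly_similar) (auto simp: similar_mat_def)
  also have "\<dots> = (\<Prod>a\<leftarrow>diag_mat D. [:- a, 1:])"
    by (rule char_poly_upper_triangular[OF D]) (auto simp: upper_triangular_def D_def)
  also have "diag_mat D = map l [0..<n]"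
    by (rule nth_equalityI) (auto simp: diag_mat_def D_def)
  finally show ?thesis .
qed

lemma proots_prod_linear_factors:
  "proots (\<Prod>a\<leftarrow>as. [:- a, 1:]) = mset (as :: 'a::idom list)"
proof (induction as)
  case (Cons a as)
  have "(\<Prod>a\<leftarrow>as. [:- a, 1:]) \<noteq> (0 :: 'a poly)"
    by auto
  then have "proots ([:- a, 1:] * (\<Prod>a\<leftarrow>as. [:- a, 1:])) = proots [:- a, 1:] + proots (\<Prod>a\<leftarrow>as. [:- a, 1:])"
    by (intro proots_mult) auto
  with Cons.IH show ?case by simp
qed simp

section \<open>Sums of eigenvalues and row sums\<close>

lemma eigenvalue_eq_quadratic_form:
  assumes es: "orthonormal_eigvecs n A k u l" and "i < k"
  shows "l i = (\<Sum>x<n. \<Sum>y<n. A $$ (x,y) * (u i x * u i y))"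
proof -
  have "(\<Sum>x<n. \<Sum>y<n. A $$ (x,y) * (u i x * u i y)) = (\<Sum>x<n. u i x * (\<Sum>y<n. A $$ (x,y) * u i y))"
    by (simp add: sum_distrib_left mult_ac)
  also have "\<dots> = l i * (\<Sum>x<n. u i x * u i x)"
    using orthonormal_eigvecs_eig[OF es \<open>i < k\<close>] by (simp add: sum_distrib_left mult_ac)
  also have "\<dots> = l i"
    using orthonormal_eigvecs_orth[OF es \<open>i < k\<close> \<open>i < k\<close>] by simp
  finally show ?thesis by simp
qed

text \<open>With \<open>w x = (\<Sum>i\<in>S. (u i x)\<^sup>2)\<close>, the estimate \<open>\<sigma> a b \<le> (a\<^sup>2 + b\<^sup>2) / 2\<close> on each
  quadratic form bounds \<open>\<sigma> (\<Sum>i\<in>S. l i)\<close> by \<open>(\<Sum>x y. A x y (w x + w y) / 2)\<close>,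
  which by symmetry is the \<open>w\<close>-weighted sum of the row sums of the nonnegative matrix \<open>A\<close>.\<close>

lemma signed_eigenvalue_sum_le_weighted_row_sums:
  fixes A :: "real mat"
  assumes nonneg: "\<And>x y. x < n \<Longrightarrow> y < n \<Longrightarrow> A $$ (x,y) \<ge> 0"
    and sym: "\<And>x y. x < n \<Longrightarrow> y < n \<Longrightarrow> A $$ (x,y) = A $$ (y,x)"
    and es: "orthonormal_eigvecs n A k u l"
    and S: "S \<subseteq> {..<k}" and \<sigma>: "\<bar>\<sigma>\<bar> \<le> 1"
  shows "\<sigma> * (\<Sum>i\<in>S. l i) \<le> (\<Sum>x<n. (\<Sum>y<n. A $$ (x,y)) * (\<Sum>i\<in>S. (u i x)\<^sup>2))"
proof -
  define w where "w x = (\<Sum>i\<in>S. (u i x)\<^sup>2)" for x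
  have "\<sigma> * (\<Sum>i\<in>S. l i) = (\<Sum>i\<in>S. \<Sum>x<n. \<Sum>y<n. A $$ (x,y) * (\<sigma> * (u i x * u i y)))"
    using S eigenvalue_eq_quadratic_form[OF es]
    by (simp add: sum_distrib_left mult.left_commute subset_eq)
  also have "\<dots> = (\<Sum>x<n. \<Sum>y<n. A $$ (x,y) * (\<Sum>i\<in>S. \<sigma> * (u i x * u i y)))"
    by (simp add: sum.swap[of _ S] sum_distrib_left)
  also have "\<dots> \<le> (\<Sum>x<n. \<Sum>y<n. A $$ (x,y) * ((w x + w y) / 2))"
  proof (intro sum_mono mult_left_mono)
    fix x y assume "x \<in> {..<n}" "y \<in> {..<n}"
    then show "0 \<le> A $$ (x,y)" using nonneg by auto
    have "\<sigma> * (u i x * u i y) \<le> ((u i x)\<^sup>2 + (u i y)\<^sup>2) / 2" for i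
    proof -
      have "\<sigma> * (u i x * u i y) \<le> \<bar>\<sigma>\<bar> * \<bar>u i x * u i y\<bar>"
        by (metis abs_ge_self abs_mult)
      also have "\<dots> \<le> \<bar>u i x * u i y\<bar>"
        using \<sigma> by (simp add: mult_left_le_one_le)
      also have "\<dots> \<le> ((u i x)\<^sup>2 + (u i y)\<^sup>2) / 2"
        using sum_squares_bound[of "\<bar>u i x\<bar>" "\<bar>u i y\<bar>"] by (simp add: abs_mult)
      finally show ?thesis .
    qed
    then have "(\<Sum>i\<in>S. \<sigma> * (u i x * u i y)) \<le> (\<Sum>i\<in>S. ((u i x)\<^sup>2 + (u i y)\<^sup>2) / 2)"
      by (intro sum_mono)
    also have "\<dots> = (w x + w y) / 2"
      by (simp add: w_def sum.distrib sum_divide_distrib[symmetric])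
    finally show "(\<Sum>i\<in>S. \<sigma> * (u i x * u i y)) \<le> (w x + w y) / 2" .
  qed
  also have "\<dots> = ((\<Sum>x<n. \<Sum>y<n. A $$ (x,y) * w x) + (\<Sum>x<n. \<Sum>y<n. A $$ (x,y) * w y)) / 2"
    by (simp add: add_divide_distrib sum.distrib sum_divide_distrib distrib_left)
  also have "(\<Sum>x<n. \<Sum>y<n. A $$ (x,y) * w y) = (\<Sum>x<n. \<Sum>y<n. A $$ (x,y) * w x)"
    by (subst sum.swap) (simp add: sym)
  also have "((\<Sum>x<n. \<Sum>y<n. A $$ (x,y) * w x) + (\<Sum>x<n. \<Sum>y<n. A $$ (x,y) * w x)) / 2
      = (\<Sum>x<n. (\<Sum>y<n. A $$ (x,y)) * w x)"
    by (simp add: sum_distrib_right)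
  finally show ?thesis unfolding w_def .
qed

lemma sum_positive_part_split:
  fixes s :: "real list"
  assumes "p \<le> length s"
    and above: "\<And>k. k < p \<Longrightarrow> t \<le> s ! k"
    and below: "\<And>k. p \<le> k \<Longrightarrow> k < length s \<Longrightarrow> s ! k \<le> t"
  shows "(\<Sum>k<length s. max (s ! k - t) 0) = (\<Sum>k<p. s ! k - t)"
proof -
  have "(\<Sum>k<length s. max (s ! k - t) 0) =
      (\<Sum>k<p. max (s ! k - t) 0) + (\<Sum>k\<in>{p..<length s}. max (s ! k - t) 0)"
    using sum.atLeastLessThan_concat[of 0 p "length s", symmetric] assms(1)
    unfolding atLeast0LessThan by blast
  also have "(\<Sum>k\<in>{p..<length s}. max (s ! k - t) 0) = 0"
    using below by (intro sum.neutral) auto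
  also have "(\<Sum>k<p. max (s ! k - t) 0) = (\<Sum>k<p. s ! k - t)"
    using above by (intro sum.cong) auto
  finally show ?thesis by simp
qed

text \<open>After subtracting the \<open>(p+1)\<close>-st largest value \<open>t\<close> (the smallest one if \<open>p = n\<close>) from all
  values, only the \<open>p\<close> largest ones remain positive.\<close>

lemma weighted_sum_le_sum_largest:
  fixes d w :: "nat \<Rightarrow> real"
  assumes w01: "\<And>x. x < n \<Longrightarrow> 0 \<le> w x \<and> w x \<le> 1"
    and w_sum: "(\<Sum>x<n. w x) = real p" and "p \<le> n"
  shows "(\<Sum>x<n. d x * w x) \<le> sum_list (take p (rev (sort (map d [0..<n]))))"
proof -
  define s where "s = rev (sort (map d [0..<n]))"
  have len: "length s = n" unfolding s_def by simp
  have sorted: "sorted_wrt (\<ge>) s" unfolding s_def by (simp add: sorted_wrt_rev)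
  have sum_s: "(\<Sum>k<n. f (s ! k)) = (\<Sum>x<n. f (d x))" for f :: "real \<Rightarrow> real"
  proof -
    have "mset s = mset (map d [0..<n])" unfolding s_def by simp
    then have "sum_list (map f s) = sum_list (map f (map d [0..<n]))"
      by (metis mset_map sum_mset_sum_list)
    then show ?thesis
      using len by (simp add: sum_list_sum_nth atLeast0LessThan)
  qed
  have s_mono: "s ! j \<le> s ! i" if "i \<le> j" "j < n" for i j
    using sorted that len by (cases "i = j") (auto simp: sorted_wrt_iff_nth_less)
  define t where "t = s ! min p (n - 1)"
  have "(\<Sum>x<n. d x * w x) = (\<Sum>x<n. (d x - t) * w x) + t * real p"
    by (simp add: left_diff_distrib sum_subtractf sum_distrib_left[symmetric] w_sum)
  also have "(\<Sum>x<n. (d x - t) * w x) \<le> (\<Sum>x<n. max (d x - t) 0)"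
  proof (rule sum_mono)
    fix x assume "x \<in> {..<n}"
    then have "0 \<le> w x" "w x \<le> 1" using w01 by auto
    then show "(d x - t) * w x \<le> max (d x - t) 0"
      by (cases "d x - t \<ge> 0") (auto simp: mult_left_le mult_nonpos_nonneg max_def)
  qed
  also have "(\<Sum>x<n. max (d x - t) 0) = (\<Sum>k<n. max (s ! k - t) 0)"
    by (rule sum_s[symmetric])
  also have "\<dots> = (\<Sum>k<p. s ! k - t)"
    using sum_positive_part_split[of p s t] \<open>p \<le> n\<close> len s_mono
    unfolding t_def by (auto simp: min_def)
  finally have "(\<Sum>x<n. d x * w x) \<le> (\<Sum>k<p. s ! k)"
    by (simp add: sum_subtractf)
  also have "\<dots> = sum_list (take p s)"
    using \<open>p \<le> n\<close> len by (simp add: sum_list_sum_nth atLeast0LessThan min_def)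
  finally show ?thesis unfolding s_def .
qed

lemma eigenvalue_sum_le_sum_largest_row_sums:
  fixes A :: "real mat"
  assumes nonneg: "\<And>x y. x < n \<Longrightarrow> y < n \<Longrightarrow> A $$ (x,y) \<ge> 0"
    and sym: "\<And>x y. x < n \<Longrightarrow> y < n \<Longrightarrow> A $$ (x,y) = A $$ (y,x)"
    and es: "orthonormal_eigvecs n A n u l"
    and S: "S \<subseteq> {..<n}" and \<sigma>: "\<bar>\<sigma>\<bar> \<le> 1"
  shows "\<sigma> * (\<Sum>i\<in>S. l i) \<le> sum_list (take (card S) (rev (sort (map (\<lambda>x. \<Sum>y<n. A $$ (x,y)) [0..<n]))))"
proof -
  define w where "w x = (\<Sum>i\<in>S. (u i x)\<^sup>2)" for x
  have "\<sigma> * (\<Sum>i\<in>S. l i) \<le> (\<Sum>x<n. (\<Sum>y<n. A $$ (x,y)) * w x)"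
    unfolding w_def by (rule signed_eigenvalue_sum_le_weighted_row_sums[OF nonneg sym es S \<sigma>])
  also have "\<dots> \<le> sum_list (take (card S) (rev (sort (map (\<lambda>x. \<Sum>y<n. A $$ (x,y)) [0..<n]))))"
  proof (rule weighted_sum_le_sum_largest)
    fix x assume "x < n"
    have "w x \<le> (\<Sum>i<n. (u i x)\<^sup>2)"
      unfolding w_def using S by (intro sum_mono2) auto
    also have "\<dots> = 1"
      using orthonormal_rows_imp_orthonormal_cols[OF orthonormal_eigvecs_orth[OF es] \<open>x < n\<close> \<open>x < n\<close>]
      by (simp add: power2_eq_square)
    finally show "0 \<le> w x \<and> w x \<le> 1"
      unfolding w_def by (simp add: sum_nonneg)
  next
    have "(\<Sum>x<n. w x) = (\<Sum>i\<in>S. \<Sum>x<n. (u i x)\<^sup>2)"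
      unfolding w_def by (rule sum.swap)
    also have "\<dots> = (\<Sum>i\<in>S. 1)"
      using S orthonormal_eigvecs_orth[OF es] by (intro sum.cong) (auto simp: power2_eq_square)
    finally show "(\<Sum>x<n. w x) = real (card S)" by simp
  next
    show "card S \<le> n" using S by (metis card_lessThan card_mono finite_lessThan)
  qed
  finally show ?thesis .
qed

lemma sum_abs_eigenvalues_le:
  fixes A :: "real mat"
  assumes A: "A \<in> carrier_mat n n"
    and nonneg: "\<And>x y. x < n \<Longrightarrow> y < n \<Longrightarrow> A $$ (x,y) \<ge> 0"
    and sym: "\<And>x y. x < n \<Longrightarrow> y < n \<Longrightarrow> A $$ (x,y) = A $$ (y,x)"
    and trace: "mat_trace A = 0"
    and es: "orthonormal_eigvecs n A n u l"
  shows "(\<Sum>i<n. \<bar>l i\<bar>) \<le> 2 * sum_list (take (min (card {i. i < n \<and> 0 < l i}) (card {i. i < n \<and> l i < 0}))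
      (rev (sort (map (\<lambda>x. \<Sum>y<n. A $$ (x,y)) [0..<n]))))"
proof -
  define P where "P = {i. i < n \<and> 0 < l i}"
  define N where "N = {i. i < n \<and> l i < 0}"
  define largest where "largest p = sum_list (take p (rev (sort (map (\<lambda>x. \<Sum>y<n. A $$ (x,y)) [0..<n]))))" for p
  have sum_P: "(\<Sum>i\<in>P. l i) = (\<Sum>i<n. if 0 < l i then l i else 0)"
    unfolding P_def by (simp add: sum.inter_filter[symmetric] lessThan_def)
  have sum_N: "(\<Sum>i\<in>N. l i) = (\<Sum>i<n. if l i < 0 then l i else 0)"
    unfolding N_def by (simp add: sum.inter_filter[symmetric] lessThan_def)
  have "(\<Sum>i\<in>P. l i) + (\<Sum>i\<in>N. l i) = (\<Sum>i<n. l i)"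
    unfolding sum_P sum_N sum.distrib[symmetric] by (intro sum.cong) auto
  also have "\<dots> = mat_trace A"
    using mat_trace_eq_sum_roots[OF A char_poly_orthonormal_eigvecs[OF A es]]
    by (simp add: sum_list_sum_nth atLeast0LessThan)
  finally have P_N: "(\<Sum>i\<in>P. l i) + (\<Sum>i\<in>N. l i) = 0"
    using trace by simp
  have abs_sum: "(\<Sum>i<n. \<bar>l i\<bar>) = (\<Sum>i\<in>P. l i) - (\<Sum>i\<in>N. l i)"
    unfolding sum_P sum_N sum_subtractf[symmetric] by (intro sum.cong) auto
  have "(\<Sum>i\<in>P. l i) \<le> largest (card P)"
    using eigenvalue_sum_le_sum_largest_row_sums[OF nonneg sym es, of P 1]
    unfolding largest_def P_def by auto
  moreover have "- (\<Sum>i\<in>N. l i) \<le> largest (card N)"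
    using eigenvalue_sum_le_sum_largest_row_sums[OF nonneg sym es, of N "-1"]
    unfolding largest_def N_def by auto
  ultimately have "(\<Sum>i<n. \<bar>l i\<bar>) \<le> 2 * largest (min (card P) (card N))"
    using abs_sum P_N by (cases "card P \<le> card N") (auto simp: min_def)
  then show ?thesis unfolding largest_def P_def N_def .
qed

section \<open>Graph energy\<close>

lemma adj_matrix_index:
  "x < n \<Longrightarrow> y < n \<Longrightarrow> adj_matrix n E $$ (x,y) = (if E x y then 1 else 0)"
  by (simp add: adj_matrix_def)

lemma adj_matrix_row_sum:
  assumes "x < n"
  shows "(\<Sum>y<n. adj_matrix n E $$ (x,y)) = real (degree_v n E x)"
proof -
  have "(\<Sum>y<n. adj_matrix n E $$ (x,y)) = real (card {y \<in> {..<n}. E x y})"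
    using assms by (simp add: adj_matrix_index sum.inter_filter[symmetric])
  also have "{y \<in> {..<n}. E x y} = {j. j < n \<and> E x j}" by auto
  finally show ?thesis unfolding degree_v_def .
qed

lemma mat_trace_adj_matrix:
  assumes "simple_graph n E"
  shows "mat_trace (adj_matrix n E) = 0"
  using assms by (simp add: mat_trace_def adj_matrix_def simple_graph_def)

lemma adj_eigenvalues_orthonormal_eigvecs:
  assumes "orthonormal_eigvecs n (adj_matrix n E) n u l"
  shows "adj_eigenvalues n E = mset (map (\<lambda>i. complex_of_real (l i)) [0..<n])"
proof -
  interpret map_poly_comm_ring_hom complex_of_real ..
  have A: "adj_matrix n E \<in> carrier_mat n n" by (simp add: adj_matrix_def)
  have "char_poly (map_mat complex_of_real (adj_matrix n E)) =
      (\<Prod>a\<leftarrow>map (\<lambda>i. complex_of_real (l i)) [0..<n]. [:- a, 1:])"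
    unfolding of_real_hom.char_poly_hom[OF A] char_poly_orthonormal_eigvecs[OF A assms]
    by (simp add: hom_prod_list comp_def)
  then show ?thesis
    unfolding adj_eigenvalues_def by (simp only: proots_prod_linear_factors)
qed

lemma sort_map_of_nat:
  "sort (map real xs) = map real (sort xs)"
  by (rule properties_for_sort) (auto simp: sorted_map)

lemma sum_largest_row_sums_adj_matrix:
  "sum_list (take h (rev (sort (map (\<lambda>x. \<Sum>y<n. adj_matrix n E $$ (x,y)) [0..<n])))) =
    real (sum_list (take h (sorted_degrees n E)))"
proof -
  have "map (\<lambda>x. \<Sum>y<n. adj_matrix n E $$ (x,y)) [0..<n] = map real (map (degree_v n E) [0..<n])"
    by (simp add: adj_matrix_row_sum)
  then show ?thesis
    by (simp only: sorted_degrees_def sort_map_of_nat rev_map take_map sum_list_of_nat)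
qed

lemma sum_mset_map_upt:
  "(\<Sum>x\<in>#mset (map g [0..<n]). f x) = (\<Sum>i<n. f (g i))"
proof -
  have "(\<Sum>x\<in>#mset (map g [0..<n]). f x) = sum_list (map f (map g [0..<n]))"
    by (metis mset_map sum_mset_sum_list)
  then show ?thesis
    by (simp add: sum_list_sum_nth atLeast0LessThan)
qed

lemma size_filter_mset_map_upt:
  "size (filter_mset Q (mset (map g [0..<n]))) = card {i. i < n \<and> Q (g i)}"
proof -
  have "size (filter_mset Q (mset (map g [0..<n]))) = length (filter (Q \<circ> g) [0..<n])"
    by (metis filter_map length_map mset_filter size_mset)
  also have "\<dots> = card {i. i < n \<and> Q (g i)}"
    by (simp add: length_filter_conv_card) (intro arg_cong[where f=card], auto)
  finally show ?thesis .
qed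

theorem mainTheorem13:
  fixes n :: nat and E :: "nat \<Rightarrow> nat \<Rightarrow> bool"
  assumes "simple_graph n E"
  shows "energy n E \<le> 2 * real (sum_list (take (min (nu_plus n E) (nu_minus n E)) (sorted_degrees n E)))"
proof -
  define A where "A = adj_matrix n E"
  have A: "A \<in> carrier_mat n n" by (simp add: A_def adj_matrix_def)
  have sym: "\<And>x y. x < n \<Longrightarrow> y < n \<Longrightarrow> A $$ (x,y) = A $$ (y,x)"
    using assms by (simp add: A_def adj_matrix_index simple_graph_def)
  have nonneg: "\<And>x y. x < n \<Longrightarrow> y < n \<Longrightarrow> A $$ (x,y) \<ge> 0"
    by (simp add: A_def adj_matrix_index)
  obtain u l where es: "orthonormal_eigvecs n A n u l"
    using orthonormal_eigvecs_exists[OF A sym] by blast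
  then have eigenvalues: "adj_eigenvalues n E = mset (map (\<lambda>i. complex_of_real (l i)) [0..<n])"
    unfolding A_def by (rule adj_eigenvalues_orthonormal_eigvecs)
  have "energy n E = (\<Sum>i<n. \<bar>l i\<bar>)"
    unfolding energy_def eigenvalues sum_mset_map_upt by simp
  moreover have "nu_plus n E = card {i. i < n \<and> 0 < l i}"
    unfolding nu_plus_def eigenvalues size_filter_mset_map_upt by simp
  moreover have "nu_minus n E = card {i. i < n \<and> l i < 0}"
    unfolding nu_minus_def eigenvalues size_filter_mset_map_upt by simp
  ultimately show ?thesis
    using sum_abs_eigenvalues_le[OF A nonneg sym _ es] mat_trace_adj_matrix[OF assms]
    unfolding A_def sum_largest_row_sums_adj_matrix by simp
qed

end
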